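(* Consider the search tree built by the POMCP++ simulation process described in the context, with $\epsilon_z<0$. Let $h\bm a$ be a belief-action node and $h\bm a\bm z$ one of its child belief nodes. If $h\bm a$ is visited infinitely often, then with probability $1$ the node $h\bm a\bm z$ is visited infinitely often.
   Context: POMCP++ builds a search tree whose nodes alternate between belief nodes (the root, or histories $h=(\bm a_0,\bm z_0,\dots,\bm z_t)$ ending with a measurement) and belief-action nodes (histories $h\bm a$ ending with an action). The action set $\mathcal A_m$ is finite. The process runs an infinite sequence of simulation episodes; each episode starts at the root and descends. At an already expanded belief node $h$ (a "visit" of $h$), an action is selected by the $\epsilon$-greedy rule: with probability $1-\epsilon_a$ the action maximizing the current value estimate $V(h\bm a)$ is chosen, and with probability $\epsilon_a$ an action is chosen uniformly at random from $\mathcal A_m$, the randomization being drawn freshly and independently of the past at each visit; the episode then visits $h\bm a$. At a belief-action node $h\bm a$ having $c$ existing child belief nodes, with probability $(c+1)^{\epsilon_z}$ (where $\epsilon_z<0$ is a parameter) a new measurement is sampled from a continuous distribution and a new child belief node $h\bm a\bm z$ is created (almost surely distinct from existing children), after which the descent stops (a rollout is performed); otherwise one of the $c$ existing children is chosen uniformly at random and the descent continues into it (a visit of that child). A newly reached unexpanded belief node is expanded (its belief-action children are created) and the descent stops. Descent also stops at depths $d$ with $\gamma^d<\epsilon$ for fixed $\gamma\in(0,1)$, $\epsilon>0$. *)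

theory Defs
  imports "HOL-Probability.Probability"
begin

text \<open>Local dynamics of POMCP++ at a belief-action node h a.
  At each visit the node has c existing children (indexed 0..c-1 in order of creation).
  The fresh randomness of a visit is a pair (b, r) of independent uniform numbers in [0,1):
  if b < (c+1) powr ez a new child (index c) is created, otherwise the existing child
  with index floor(r * c) (uniform among the c children) is descended into.\<close>

datatype outcome = NewChild | Descend nat

definition decision :: "real \<Rightarrow> nat \<Rightarrow> real \<times> real \<Rightarrow> outcome" where
  "decision ez c u =
     (if fst u < real (c + 1) powr ez then NewChild else Descend (nat \<lfloor>snd u * real c\<rfloor>))"

fun children :: "real \<Rightarrow> (nat \<Rightarrow> real \<times> real) \<Rightarrow> nat \<Rightarrow> nat" where
  "children ez U 0 = 0"
| "children ez U (Suc k) =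
     (if decision ez (children ez U k) (U k) = NewChild
      then Suc (children ez U k) else children ez U k)"

definition visit_outcome :: "real \<Rightarrow> (nat \<Rightarrow> real \<times> real) \<Rightarrow> nat \<Rightarrow> outcome" where
  "visit_outcome ez U k = decision ez (children ez U k) (U k)"

end

theory Submission
  imports Defs
begin

text \<open>Once child \<open>i\<close> exists, the \<open>n\<close>-th visit of \<open>h a\<close>, at which the number \<open>c\<close> of
  children satisfies \<open>i < c \<le> n\<close>, descends into \<open>i\<close> with probability at least
  \<open>(1 - (c + 1) powr ez) / c \<ge> a / (n + 1)\<close> with \<open>a = 1 - 2 powr ez > 0\<close>, independently of
  the previous visits. So the probability of missing \<open>i\<close> at all visits \<open>m, \<dots>, n - 1\<close> is at
  most \<open>\<Prod>k\<in>{m..<n}. 1 - a / (k + 1) \<le> exp (- a (harm n - harm m))\<close>, which tends to \<open>0\<close>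
  because the harmonic series diverges.\<close>

instance outcome :: countable by countable_datatype

lemma measurable_decision [measurable]: "decision ez c \<in> borel \<rightarrow>\<^sub>M count_space UNIV"
proof -
  have [measurable]: "fst \<in> borel_measurable (borel :: (real \<times> real) measure)"
      "snd \<in> borel_measurable (borel :: (real \<times> real) measure)"
    by (simp_all add: borel_measurable_continuous_onI continuous_on_fst continuous_on_snd continuous_on_id)
  show ?thesis unfolding decision_def by measurable
qed

abbreviation history_space :: "nat \<Rightarrow> (nat \<Rightarrow> real \<times> real) measure" where
  "history_space n \<equiv> PiM {..<n} (\<lambda>_. borel)"

lemma measurable_children [measurable]:
  "k \<le> n \<Longrightarrow> (\<lambda>f. children ez f k) \<in> history_space n \<rightarrow>\<^sub>M count_space UNIV"
proof (induction k)
  case (Suc k) then show ?case by simp measurable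
qed simp

lemma measurable_visit_outcome [measurable]:
  "k < n \<Longrightarrow> (\<lambda>f. visit_outcome ez f k) \<in> history_space n \<rightarrow>\<^sub>M count_space UNIV"
  unfolding visit_outcome_def by measurable

lemma children_cong: "(\<And>j. j < k \<Longrightarrow> f j = g j) \<Longrightarrow> children ez f k = children ez g k"
  by (induction k) (auto simp: decision_def)

lemma visit_outcome_cong:
  "(\<And>j. j \<le> k \<Longrightarrow> f j = g j) \<Longrightarrow> visit_outcome ez f k = visit_outcome ez g k"
  unfolding visit_outcome_def by (metis children_cong le_refl less_imp_le)

lemma children_le: "children ez f k \<le> k"
  by (induction k) auto

lemma children_mono: "k \<le> l \<Longrightarrow> children ez f k \<le> children ez f l"
  by (induction l rule: dec_induct) (auto intro: le_SucI)

abbreviation uniform01 :: "real measure" where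
  "uniform01 \<equiv> uniform_measure lborel {0..<1}"

lemma prob_space_uniform01: "prob_space uniform01"
  by (rule prob_space_uniform_measure) auto

lemma emeasure_uniform01_Ico:
  assumes "0 \<le> a" "a \<le> b" "b \<le> 1"
  shows "emeasure uniform01 {a..<b} = ennreal (b - a)"
proof -
  have "{0..<1} \<inter> {a..<b} = {a..<b}" using assms by auto
  then show ?thesis using assms by (simp add: emeasure_lborel_Ico divide_ennreal_def)
qed

lemma sets_uniform01_square: "sets (uniform01 \<Otimes>\<^sub>M uniform01) = sets borel"
proof -
  have "sets (uniform01 \<Otimes>\<^sub>M uniform01) = sets (borel \<Otimes>\<^sub>M (borel :: real measure))"
    by (intro sets_pair_measure_cong) auto
  then show ?thesis using borel_prod[where 'a=real and 'b=real] by metis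
qed

lemma measure_uniform01_square_Times:
  assumes "0 \<le> a" "a \<le> b" "b \<le> 1" "0 \<le> a'" "a' \<le> b'" "b' \<le> 1"
  shows "measure (uniform01 \<Otimes>\<^sub>M uniform01) ({a..<b} \<times> {a'..<b'}) = (b - a) * (b' - a')"
proof -
  interpret prob_space uniform01 by (rule prob_space_uniform01)
  have "emeasure (uniform01 \<Otimes>\<^sub>M uniform01) ({a..<b} \<times> {a'..<b'})
      = emeasure uniform01 {a..<b} * emeasure uniform01 {a'..<b'}"
    by (rule emeasure_pair_measure_Times) auto
  also have "\<dots> = ennreal ((b - a) * (b' - a'))"
    using assms by (simp add: emeasure_uniform01_Ico ennreal_mult divide_ennreal_def)
  finally show ?thesis using assms by (simp add: measure_def)
qed

lemma measure_decision_Descend_ge: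
  assumes "i < c" "ez < 0"
  shows "(1 - real (c + 1) powr ez) / real c
    \<le> measure (uniform01 \<Otimes>\<^sub>M uniform01) {u. decision ez c u = Descend i}"
proof -
  interpret pair_prob_space uniform01 uniform01
    by (simp add: pair_prob_space_def pair_sigma_finite_def prob_space_uniform01
        prob_space_imp_sigma_finite)
  define t where "t = real (c + 1) powr ez"
  have t: "0 \<le> t" "t \<le> 1"
    unfolding t_def using assms by (auto intro!: powr_less_one[THEN less_imp_le])
  have c: "real c > 0" using assms by simp
  have "{t..<1} \<times> {real i / c..<(real i + 1) / c} \<subseteq> {u. decision ez c u = Descend i}"
  proof clarsimp
    fix b r assume "t \<le> b" "real i / c \<le> r" "r < (real i + 1) / c"
    then have "t \<le> b" "\<lfloor>r * c\<rfloor> = int i"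
      using c by (simp_all add: floor_eq_iff field_simps)
    then show "decision ez c (b, r) = Descend i"
      unfolding decision_def t_def by simp
  qed
  moreover have "{u. decision ez c u = Descend i} \<in> sets (uniform01 \<Otimes>\<^sub>M uniform01)"
    unfolding sets_uniform01_square by measurable
  ultimately have "measure (uniform01 \<Otimes>\<^sub>M uniform01) ({t..<1} \<times> {real i / c..<(real i + 1) / c})
      \<le> measure (uniform01 \<Otimes>\<^sub>M uniform01) {u. decision ez c u = Descend i}"
    by (intro finite_measure_mono)
  moreover have "measure (uniform01 \<Otimes>\<^sub>M uniform01) ({t..<1} \<times> {real i / c..<(real i + 1) / c})
      = (1 - t) / c"
    using t c assms
    by (subst measure_uniform01_square_Times) (simp_all add: field_simps)
  ultimately show ?thesis unfolding t_def by simp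
qed

lemma (in prob_space) prob_restrict_Int_next:
  fixes U :: "nat \<Rightarrow> 'a \<Rightarrow> 'b"
  assumes indep: "indep_vars (\<lambda>_. N) U UNIV"
    and S: "S \<in> sets (PiM {..<n} (\<lambda>_. N))" and T: "T \<in> sets N"
  shows "prob ((\<lambda>\<omega>. restrict (\<lambda>k. U k \<omega>) {..<n}) -` S \<inter> space M \<inter> (U n -` T \<inter> space M)) =
    prob ((\<lambda>\<omega>. restrict (\<lambda>k. U k \<omega>) {..<n}) -` S \<inter> space M) * prob (U n -` T \<inter> space M)"
proof -
  let ?X = "\<lambda>\<omega>. restrict (\<lambda>k. U k \<omega>) {..<n}" and ?Y = "\<lambda>\<omega>. restrict (\<lambda>k. U k \<omega>) {n}"
  let ?T = "(\<lambda>f. f n) -` T \<inter> space (PiM {n} (\<lambda>_. N))"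
  have indep_restrict_next: "indep_var (PiM {..<n} (\<lambda>_. N)) ?X (PiM {n} (\<lambda>_. N)) ?Y"
    by (rule indep_var_restrict[OF indep]) auto
  have T': "?T \<in> sets (PiM {n} (\<lambda>_. N))"
    using T by measurable
  have "prob ((\<lambda>\<omega>. (?X \<omega>, ?Y \<omega>)) -` (S \<times> ?T) \<inter> space M) =
      prob (?X -` S \<inter> space M) * prob (?Y -` ?T \<inter> space M)"
    by (rule indep_varD[OF indep_restrict_next S T'])
  moreover have "(\<lambda>\<omega>. (?X \<omega>, ?Y \<omega>)) -` (S \<times> ?T) \<inter> space M = ?X -` S \<inter> space M \<inter> (U n -` T \<inter> space M)"
    and "?Y -` ?T \<inter> space M = U n -` T \<inter> space M"
    using sets.sets_into_space[OF T] by (auto simp: space_PiM PiE_iff)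
  ultimately show ?thesis by simp
qed

lemma tendsto_exp_neg_harm_diff:
  fixes a :: real
  assumes "0 < a"
  shows "(\<lambda>n. exp (- (a * (harm n - harm m)))) \<longlonglongrightarrow> 0"
proof -
  have "filterlim (\<lambda>n. harm n - harm m :: real) at_top sequentially"
    using filterlim_tendsto_add_at_top[OF tendsto_const[of "- harm m"] harm_at_top] by simp
  then have "filterlim (\<lambda>n. a * (harm n - harm m) :: real) at_top sequentially"
    using assms by (intro filterlim_tendsto_pos_mult_at_top[OF tendsto_const])
  then have "filterlim (\<lambda>n. - (a * (harm n - harm m)) :: real) at_bot sequentially"
    by (simp add: filterlim_uminus_at_top)
  then show ?thesis by (rule filterlim_compose[OF exp_at_bot])
qed

locale belief_action_visits = prob_space M for M :: "'w measure" +
  fixes ez :: real and U :: "nat \<Rightarrow> 'w \<Rightarrow> real \<times> real" and i :: nat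
  assumes ez_neg: "ez < 0"
    and indep_U: "indep_vars (\<lambda>_. borel) U UNIV"
    and distr_U: "\<And>k. distr M borel (U k) = uniform01 \<Otimes>\<^sub>M uniform01"
begin

abbreviation draws :: "'w \<Rightarrow> nat \<Rightarrow> real \<times> real" where
  "draws \<omega> \<equiv> \<lambda>k. U k \<omega>"

definition history :: "nat \<Rightarrow> 'w \<Rightarrow> nat \<Rightarrow> real \<times> real" where
  "history n \<omega> = restrict (draws \<omega>) {..<n}"

lemma random_variable_U: "random_variable borel (U k)"
  using indep_U unfolding indep_vars_def by auto

lemma measurable_history: "history n \<in> M \<rightarrow>\<^sub>M history_space n"
  unfolding history_def by (intro measurable_restrict random_variable_U)

lemma children_history: "k \<le> n \<Longrightarrow> children ez (history n \<omega>) k = children ez (draws \<omega>) k"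
  unfolding history_def by (rule children_cong) auto

lemma visit_outcome_history:
  "k < n \<Longrightarrow> visit_outcome ez (history n \<omega>) k = visit_outcome ez (draws \<omega>) k"
  unfolding history_def by (rule visit_outcome_cong) auto

definition descends :: "nat \<Rightarrow> (real \<times> real) set" where
  "descends c = {u. decision ez c u = Descend i}"

definition avoid :: "nat \<Rightarrow> nat \<Rightarrow> 'w set" where
  "avoid m n = {\<omega> \<in> space M. i < children ez (draws \<omega>) m \<and>
     (\<forall>k\<in>{m..<n}. visit_outcome ez (draws \<omega>) k \<noteq> Descend i)}"

definition avoid_history :: "nat \<Rightarrow> nat \<Rightarrow> nat \<Rightarrow> (nat \<Rightarrow> real \<times> real) set" where
  "avoid_history m n c = {f \<in> space (history_space n). i < children ez f m \<and>
     (\<forall>k\<in>{m..<n}. visit_outcome ez f k \<noteq> Descend i) \<and> children ez f n = c}"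

lemma sets_avoid_history: "m \<le> n \<Longrightarrow> avoid_history m n c \<in> sets (history_space n)"
  unfolding avoid_history_def by measurable

lemma history_in_avoid_history_iff:
  assumes "m \<le> n" "\<omega> \<in> space M"
  shows "history n \<omega> \<in> avoid_history m n c \<longleftrightarrow> \<omega> \<in> avoid m n \<and> children ez (draws \<omega>) n = c"
  using assms measurable_space[OF measurable_history]
  by (auto simp: avoid_history_def avoid_def children_history visit_outcome_history)

lemma avoid_eq_UN:
  assumes "m \<le> n"
  shows "avoid m n = (\<Union>c\<in>{i<..n}. history n -` avoid_history m n c \<inter> space M)"
proof (intro equalityI subsetI)
  fix \<omega> assume \<omega>: "\<omega> \<in> avoid m n"
  then have "\<omega> \<in> space M" "children ez (draws \<omega>) n \<in> {i<..n}"
    using children_mono[OF assms, of ez "draws \<omega>"] children_le[of ez "draws \<omega>" n]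
    by (auto simp: avoid_def)
  then show "\<omega> \<in> (\<Union>c\<in>{i<..n}. history n -` avoid_history m n c \<inter> space M)"
    using \<omega> by (auto simp: history_in_avoid_history_iff[OF assms])
qed (auto simp: history_in_avoid_history_iff[OF assms])

lemma avoid_Suc_eq_UN:
  assumes "m \<le> n"
  shows "avoid m (Suc n) = (\<Union>c\<in>{i<..n}.
    history n -` avoid_history m n c \<inter> space M \<inter> (U n -` (- descends c) \<inter> space M))"
proof -
  have "avoid m (Suc n) = avoid m n \<inter> {\<omega>. decision ez (children ez (draws \<omega>) n) (U n \<omega>) \<noteq> Descend i}"
    using assms by (auto simp: avoid_def visit_outcome_def less_Suc_eq)
  then show ?thesis
    using assms by (subst (asm) avoid_eq_UN) (auto simp: descends_def history_in_avoid_history_iff)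
qed

lemma sets_avoid:
  assumes "m \<le> n"
  shows "avoid m n \<in> events"
  unfolding avoid_eq_UN[OF assms] using sets_avoid_history[OF assms]
  by (intro sets.finite_UN measurable_sets[OF measurable_history]) auto

lemma sets_descends [measurable]: "descends c \<in> sets borel"
  unfolding descends_def by measurable

lemma prob_U_vimage:
  assumes "T \<in> sets borel"
  shows "prob (U n -` T \<inter> space M) = measure (uniform01 \<Otimes>\<^sub>M uniform01) T"
proof -
  have "prob (U n -` T \<inter> space M) = measure (distr M borel (U n)) T"
    using assms random_variable_U by (simp add: measure_distr)
  then show ?thesis by (simp add: distr_U)
qed

definition descent_const :: real where
  "descent_const = 1 - 2 powr ez"

lemma descent_const_pos: "0 < descent_const"
  unfolding descent_const_def using powr_less_one[of 2 ez] ez_neg by simp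

lemma prob_not_descends_le:
  assumes "i < c" "c \<le> n"
  shows "prob (U n -` (- descends c) \<inter> space M) \<le> 1 - descent_const / (real n + 1)"
proof -
  have c: "0 < real c" using assms by simp
  have "descent_const / (real n + 1) \<le> descent_const / real c"
    using descent_const_pos c assms by (intro divide_left_mono) auto
  also have "\<dots> \<le> (1 - real (c + 1) powr ez) / real c"
    using assms ez_neg c unfolding descent_const_def
    by (intro divide_right_mono diff_left_mono powr_mono2') auto
  also have "\<dots> \<le> prob (U n -` descends c \<inter> space M)"
    unfolding prob_U_vimage[OF sets_descends] unfolding descends_def
    by (rule measure_decision_Descend_ge[OF assms(1) ez_neg])
  finally have "descent_const / (real n + 1) \<le> prob (U n -` descends c \<inter> space M)" .
  moreover have "U n -` (- descends c) \<inter> space M = space M - (U n -` descends c \<inter> space M)"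
    by auto
  ultimately show ?thesis
    using prob_compl[OF measurable_sets[OF random_variable_U sets_descends]] by simp
qed

lemma prob_history_Int_U:
  "S \<in> sets (history_space n) \<Longrightarrow> T \<in> sets borel \<Longrightarrow>
    prob (history n -` S \<inter> space M \<inter> (U n -` T \<inter> space M)) =
    prob (history n -` S \<inter> space M) * prob (U n -` T \<inter> space M)"
  unfolding history_def[abs_def] by (rule prob_restrict_Int_next[OF indep_U])

lemma prob_avoid_Suc_le:
  assumes "m \<le> n"
  shows "prob (avoid m (Suc n)) \<le> (1 - descent_const / (real n + 1)) * prob (avoid m n)"
proof -
  let ?q = "1 - descent_const / (real n + 1)"
  let ?P = "\<lambda>c. history n -` avoid_history m n c \<inter> space M"
  let ?N = "\<lambda>c. U n -` (- descends c) \<inter> space M"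
  have P: "?P c \<in> events" for c
    using sets_avoid_history[OF assms] by (rule measurable_sets[OF measurable_history])
  have N: "?N c \<in> events" for c
    by (rule measurable_sets[OF random_variable_U]) measurable
  have "prob (avoid m (Suc n)) = (\<Sum>c\<in>{i<..n}. prob (?P c \<inter> ?N c))"
    unfolding avoid_Suc_eq_UN[OF assms] using P N
    by (intro measure_finite_Union)
      (auto simp: disjoint_family_on_def avoid_history_def emeasure_eq_measure)
  also have "\<dots> = (\<Sum>c\<in>{i<..n}. prob (?P c) * prob (?N c))"
    using sets_avoid_history[OF assms] by (intro sum.cong prob_history_Int_U) auto
  also have "\<dots> \<le> (\<Sum>c\<in>{i<..n}. prob (?P c) * ?q)"
    by (intro sum_mono mult_left_mono prob_not_descends_le) auto
  also have "\<dots> = ?q * prob (avoid m n)"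
    unfolding avoid_eq_UN[OF assms] using P
    by (subst measure_finite_Union)
      (auto simp: disjoint_family_on_def avoid_history_def emeasure_eq_measure sum_distrib_left
        mult.commute)
  finally show ?thesis .
qed

lemma prob_avoid_le_exp:
  "m \<le> n \<Longrightarrow> prob (avoid m n) \<le> exp (- (descent_const * (harm n - harm m)))"
proof (induction n rule: dec_induct)
  case base
  then show ?case by simp
next
  case (step n)
  let ?d = "descent_const / (real n + 1)"
  have "prob (avoid m (Suc n)) \<le> (1 - ?d) * prob (avoid m n)"
    by (rule prob_avoid_Suc_le[OF step.hyps(1)])
  also have "\<dots> \<le> exp (- ?d) * exp (- (descent_const * (harm n - harm m)))"
  proof (intro mult_mono step.IH)
    show "1 - ?d \<le> exp (- ?d)"
      using exp_ge_add_one_self[of "- ?d"] by simp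
  qed auto
  also have "\<dots> = exp (- (descent_const * (harm (Suc n) - harm m)))"
    by (simp add: harm_Suc exp_add[symmetric] field_simps)
  finally show ?case .
qed

lemma avoid_forever_null: "(\<Inter>n\<in>{m..}. avoid m n) \<in> null_sets M"
proof -
  let ?E = "\<Inter>n\<in>{m..}. avoid m n"
  have E: "?E \<in> events"
    using sets_avoid by (intro sets.countable_INT') auto
  have "prob ?E \<le> exp (- (descent_const * (harm n - harm m)))" if "m \<le> n" for n
    using finite_measure_mono[OF _ sets_avoid[OF that], of ?E] prob_avoid_le_exp[OF that] that
    by fastforce
  then have "prob ?E \<le> 0"
    by (intro tendsto_lowerbound[OF tendsto_exp_neg_harm_diff[OF descent_const_pos]]
        eventually_sequentiallyI[of m]) auto
  then show ?thesis
    using E by (simp add: measure_le_0_iff null_sets_def emeasure_eq_measure)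
qed

lemma AE_infinite_descents:
  "AE \<omega> in M. (\<exists>k. i < children ez (draws \<omega>) k) \<longrightarrow>
    infinite {k. visit_outcome ez (draws \<omega>) k = Descend i}"
proof -
  have avoids_forever: "\<omega> \<in> (\<Union>m. \<Inter>n\<in>{m..}. avoid m n)"
    if \<omega>: "\<omega> \<in> space M" and k: "i < children ez (draws \<omega>) k"
      and fin: "finite {k. visit_outcome ez (draws \<omega>) k = Descend i}" for \<omega> k
  proof -
    obtain b where "\<And>j. visit_outcome ez (draws \<omega>) j = Descend i \<Longrightarrow> j < b"
      using fin finite_nat_bounded by blast
    then have "\<omega> \<in> avoid (max k b) n" for n
      using \<omega> k children_mono[of k "max k b" ez "draws \<omega>"] by (fastforce simp: avoid_def)
    then show ?thesis by blast
  qed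
  have "AE \<omega> in M. \<omega> \<notin> (\<Union>m. \<Inter>n\<in>{m..}. avoid m n)"
    by (intro AE_not_in null_sets_UN avoid_forever_null)
  then show ?thesis
    using AE_space by eventually_elim (blast dest: avoids_forever)
qed

end

theorem lemma2:
  fixes M :: "'w measure" and ez :: real
    and U :: "nat \<Rightarrow> 'w \<Rightarrow> real \<times> real"
    and N :: "'w \<Rightarrow> enat" and i :: nat
  assumes "prob_space M"
    and "ez < 0"
    and "prob_space.indep_vars M (\<lambda>_. borel) U UNIV"
    and "\<And>k. distr M borel (U k) =
           uniform_measure lborel {0..<1} \<Otimes>\<^sub>M uniform_measure lborel {0..<1::real}"
  shows "AE w in M. N w = \<infinity> \<longrightarrow> (\<exists>k. i < children ez (\<lambda>k. U k w) k) \<longrightarrow>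
           infinite {k. enat k < N w \<and> visit_outcome ez (\<lambda>k. U k w) k = Descend i}"
proof -
  interpret belief_action_visits M ez U i
    using assms by (simp add: belief_action_visits_def belief_action_visits_axioms_def)
  show ?thesis
    using AE_infinite_descents by eventually_elim simp
qed

end
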